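(* Let $G$ be an index coding problem on $n$ messages, let $1\le n_1<n$, and let $G_1$ and $G_2$ be the subproblems induced on $[1:n_1]$ and $[n_1+1:n]$, with capacity regions $\mathscr{C}_1\subseteq\mathbb{R}^{n_1}$ and $\mathscr{C}_2\subseteq\mathbb{R}^{n-n_1}$. If $G$ has an edge from every node of $G_1$ to every node of $G_2$ and from every node of $G_2$ to every node of $G_1$ (i.e., $[n_1+1:n]\subseteq A_j$ for all $j\le n_1$ and $[1:n_1]\subseteq A_j$ for all $j>n_1$), then \[ \mathscr{C}=\bigl\{({\bf R}_1,{\bf R}_2): {\bf R}_1\in\mathscr{C}_1,\ {\bf R}_2\in\mathscr{C}_2\bigr\}=\mathscr{C}_1\times\mathscr{C}_2. \]
   Context: Index coding: an instance with $n$ messages is specified by side information sets $A_1,\ldots,A_n$ with $A_j\subseteq[1:n]\setminus\{j\}$, equivalently a directed side information graph $G$ on $[1:n]$ with an edge $i\to j$ iff $i\in A_j$. A $(t_1,\ldots,t_n,r)$ index code (with $t_j$ nonnegative integers, $r$ a positive integer) consists of an encoder $\phi:\prod_i\{0,1\}^{t_i}\to\{0,1\}^r$ and decoders $\psi_j:\{0,1\}^r\times\prod_{k\in A_j}\{0,1\}^{t_k}\to\{0,1\}^{t_j}$ with $\psi_j(\phi(x^n),(x_k)_{k\in A_j})=x_j$ for all message tuples $x^n$ and all $j$. A nonnegative rate tuple is achievable if $R_j\le t_j/r$ for all $j$ for some such code; the capacity region is the closure of the set of achievable rate tuples. The subproblem induced on a vertex subset $S$ is the index coding problem with messages indexed by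 $S$ and side information sets $A_j\cap S$, $j\in S$ (i.e., the vertex-induced subgraph $G[S]$). *)

theory Defs
  imports "HOL-Analysis.Analysis"
begin

text \<open>An index coding problem is given by a finite set S of message indices (natural numbers)
and side information sets A j (only A j \<inter> S matters, i.e. the problem induced on S).
Rate tuples are functions nat \<Rightarrow> real vanishing outside S; the capacity region is the
closure in the product topology (which on the finitely many coordinates in S is the
Euclidean topology).\<close>

definition restr :: "(nat \<Rightarrow> bool list) \<Rightarrow> nat set \<Rightarrow> nat \<Rightarrow> bool list" where
  "restr x B = (\<lambda>k. if k \<in> B then x k else [])"

definition msgs :: "nat set \<Rightarrow> (nat \<Rightarrow> nat) \<Rightarrow> (nat \<Rightarrow> bool list) set" where
  "msgs S t = {x. (\<forall>i\<in>S. length (x i) = t i) \<and> (\<forall>i. i \<notin> S \<longrightarrow> x i = [])}"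

definition index_code :: "nat set \<Rightarrow> (nat \<Rightarrow> nat set) \<Rightarrow> (nat \<Rightarrow> nat) \<Rightarrow> nat \<Rightarrow> bool" where
  "index_code S A t r \<longleftrightarrow>
     (\<exists>(phi :: (nat \<Rightarrow> bool list) \<Rightarrow> bool list)
        (psi :: nat \<Rightarrow> bool list \<Rightarrow> (nat \<Rightarrow> bool list) \<Rightarrow> bool list).
        \<forall>x\<in>msgs S t. length (phi x) = r \<and>
          (\<forall>j\<in>S. psi j (phi x) (restr x (A j \<inter> S)) = x j))"

definition achievable :: "nat set \<Rightarrow> (nat \<Rightarrow> nat set) \<Rightarrow> (nat \<Rightarrow> real) \<Rightarrow> bool" where
  "achievable S A R \<longleftrightarrow>
     (\<forall>j. j \<notin> S \<longrightarrow> R j = 0) \<and> (\<forall>j\<in>S. 0 \<le> R j) \<and>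
     (\<exists>t r. r > 0 \<and> index_code S A t r \<and> (\<forall>j\<in>S. R j \<le> real (t j) / real r))"

definition capacity :: "nat set \<Rightarrow> (nat \<Rightarrow> nat set) \<Rightarrow> (nat \<Rightarrow> real) set" where
  "capacity S A = closure {R. achievable S A R}"

end

theory Submission imports Defs begin

text \<open>Converse: a code for the whole problem yields codes for both subproblems at the same
rates, since a receiver in one part can pretend the messages of the other part are all zero.
Achievability: repeat codes for the two subproblems until their codewords have a common length
and broadcast the XOR of the two codewords. Every receiver knows all messages of the other part,
so it can recompute that part's codeword and strip it off. Both inclusions pass to the closures
because restricting and merging rate tuples are continuous.\<close>

lemma concat_take_drop_blocks:
  "m * t \<le> length xs \<Longrightarrow> concat (map (\<lambda>c. take t (drop (c * t) xs)) [0..<m]) = take (m * t) xs"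
proof (induction m)
  case (Suc m)
  then have "concat (map (\<lambda>c. take t (drop (c * t) xs)) [0..<Suc m])
      = take (m * t) xs @ take t (drop (m * t) xs)"
    by simp
  also have "\<dots> = take (m * t + t) xs"
    by (simp add: take_add)
  finally show ?case
    by (simp add: add.commute)
qed simp

lemma take_drop_concat_blocks:
  assumes "\<And>c. c < m \<Longrightarrow> length (f c) = r" and "c < m"
  shows "take r (drop (c * r) (concat (map f [0..<m]))) = f c"
  using assms
proof (induction m)
  case (Suc m)
  have len: "length (concat (map f [0..<m])) = m * r"
    using Suc.prems(1) by (induction m) auto
  show ?case
  proof (cases "c < m")
    case True
    then have "c * r + r \<le> m * r"
      by (metis add.commute mult_Suc less_eq_Suc_le mult_le_mono1)
    with Suc True len show ?thesis
      by simp
  next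
    case False
    with Suc.prems(2) have "c = m"
      by simp
    with len Suc.prems(1) show ?thesis
      by simp
  qed
qed simp

definition chunk :: "nat \<Rightarrow> (nat \<Rightarrow> nat) \<Rightarrow> (nat \<Rightarrow> bool list) \<Rightarrow> nat \<Rightarrow> bool list" where
  "chunk c t x = (\<lambda>i. take (t i) (drop (c * t i) (x i)))"

lemma chunk_restr: "chunk c t (restr x B) = restr (chunk c t x) B"
  by (auto simp: chunk_def restr_def)

lemma chunk_in_msgs:
  assumes "x \<in> msgs S (\<lambda>i. m * t i)" and "c < m"
  shows "chunk c t x \<in> msgs S t"
proof -
  have "c * t i + t i \<le> m * t i" for i
    using \<open>c < m\<close> by (metis add.commute mult_Suc less_eq_Suc_le mult_le_mono1)
  then have "t i \<le> m * t i - c * t i" for i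
    by (metis add_diff_cancel_left' diff_le_mono)
  with assms(1) show ?thesis
    by (auto simp: msgs_def chunk_def min_def intro: le_antisym)
qed

lemma index_code_repeat:
  assumes "index_code S A t r"
  shows "index_code S A (\<lambda>i. m * t i) (m * r)"
proof -
  from assms obtain phi :: "(nat \<Rightarrow> bool list) \<Rightarrow> bool list"
    and psi :: "nat \<Rightarrow> bool list \<Rightarrow> (nat \<Rightarrow> bool list) \<Rightarrow> bool list"
    where code: "\<forall>x\<in>msgs S t. length (phi x) = r \<and>
      (\<forall>j\<in>S. psi j (phi x) (restr x (A j \<inter> S)) = x j)"
    unfolding index_code_def by blast
  define phi' where "phi' x = concat (map (\<lambda>c. phi (chunk c t x)) [0..<m])" for x
  define psi' where
    "psi' j w y = concat (map (\<lambda>c. psi j (take r (drop (c * r) w)) (chunk c t y)) [0..<m])"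
    for j w y
  show ?thesis
    unfolding index_code_def
  proof (intro exI ballI conjI)
    fix x assume x: "x \<in> msgs S (\<lambda>i. m * t i)"
    have chunks: "chunk c t x \<in> msgs S t" if "c < m" for c
      using chunk_in_msgs[OF x that] .
    have lens: "length (phi (chunk c t x)) = r" if "c < m" for c
      using code chunks[OF that] by blast
    then have "map (\<lambda>c. length (phi (chunk c t x))) [0..<m] = map (\<lambda>_. r) [0..<m]"
      by simp
    then show "length (phi' x) = m * r"
      unfolding phi'_def length_concat map_map o_def by (simp only: sum_list_triv) simp
    fix j assume j: "j \<in> S"
    have "psi' j (phi' x) (restr x (A j \<inter> S))
        = concat (map (\<lambda>c. psi j (phi (chunk c t x)) (restr (chunk c t x) (A j \<inter> S))) [0..<m])"
      unfolding psi'_def phi'_def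
      using take_drop_concat_blocks[of m "\<lambda>c. phi (chunk c t x)" r] lens
      by (auto simp: chunk_restr intro!: arg_cong[where f = concat] map_cong)
    also have "\<dots> = concat (map (\<lambda>c. take (t j) (drop (c * t j) (x j))) [0..<m])"
      using code chunks j by (auto simp: chunk_def intro!: arg_cong[where f = concat] map_cong)
    also have "\<dots> = x j"
      using concat_take_drop_blocks[of m "t j" "x j"] x j by (simp add: msgs_def)
    finally show "psi' j (phi' x) (restr x (A j \<inter> S)) = x j" .
  qed
qed

lemma index_code_restrict:
  assumes "index_code S A t r" and "S' \<subseteq> S"
  shows "index_code S' A t r"
proof -
  from assms(1) obtain phi :: "(nat \<Rightarrow> bool list) \<Rightarrow> bool list"
    and psi :: "nat \<Rightarrow> bool list \<Rightarrow> (nat \<Rightarrow> bool list) \<Rightarrow> bool list"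
    where code: "\<forall>x\<in>msgs S t. length (phi x) = r \<and>
      (\<forall>j\<in>S. psi j (phi x) (restr x (A j \<inter> S)) = x j)"
    unfolding index_code_def by blast
  define pad where
    "pad B x = (\<lambda>k. if k \<in> B then if k \<in> S' then x k else replicate (t k) False else [])"
    for B and x :: "nat \<Rightarrow> bool list"
  show ?thesis
    unfolding index_code_def
  proof (intro exI ballI conjI)
    fix x assume x: "x \<in> msgs S' t"
    then have padded: "pad S x \<in> msgs S t"
      using assms(2) by (auto simp: msgs_def pad_def)
    then show "length (phi (pad S x)) = r"
      using code by blast
    fix j assume j: "j \<in> S'"
    have "pad (A j \<inter> S) (restr x (A j \<inter> S')) = restr (pad S x) (A j \<inter> S)"
      by (auto simp: pad_def restr_def)
    then show "(\<lambda>w y. psi j w (pad (A j \<inter> S) y)) (phi (pad S x)) (restr x (A j \<inter> S')) = x j"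
      using code padded j assms(2) by (auto simp: pad_def)
  qed
qed

lemma xor_cancel_right: "length a = length b \<Longrightarrow> map2 (\<noteq>) (map2 (\<noteq>) a b) b = (a :: bool list)"
  by (induction a b rule: list_induct2) auto

lemma xor_cancel_left: "length a = length b \<Longrightarrow> map2 (\<noteq>) (map2 (\<noteq>) a b) a = (b :: bool list)"
  by (induction a b rule: list_induct2) auto

lemma index_code_xor:
  assumes code1: "index_code S1 A t1 r" and code2: "index_code S2 A t2 r"
    and disj: "S1 \<inter> S2 = {}"
    and edges12: "\<forall>j\<in>S1. S2 \<subseteq> A j" and edges21: "\<forall>j\<in>S2. S1 \<subseteq> A j"
  shows "index_code (S1 \<union> S2) A (\<lambda>i. if i \<in> S1 then t1 i else t2 i) r"
proof -
  from code1 obtain phi1 :: "(nat \<Rightarrow> bool list) \<Rightarrow> bool list"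
    and psi1 :: "nat \<Rightarrow> bool list \<Rightarrow> (nat \<Rightarrow> bool list) \<Rightarrow> bool list"
    where P1: "\<forall>x\<in>msgs S1 t1. length (phi1 x) = r \<and>
      (\<forall>j\<in>S1. psi1 j (phi1 x) (restr x (A j \<inter> S1)) = x j)"
    unfolding index_code_def by blast
  from code2 obtain phi2 :: "(nat \<Rightarrow> bool list) \<Rightarrow> bool list"
    and psi2 :: "nat \<Rightarrow> bool list \<Rightarrow> (nat \<Rightarrow> bool list) \<Rightarrow> bool list"
    where P2: "\<forall>x\<in>msgs S2 t2. length (phi2 x) = r \<and>
      (\<forall>j\<in>S2. psi2 j (phi2 x) (restr x (A j \<inter> S2)) = x j)"
    unfolding index_code_def by blast
  let ?S = "S1 \<union> S2"
  define phi where "phi x = map2 (\<noteq>) (phi1 (restr x S1)) (phi2 (restr x S2))" for x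
  define psi where
    "psi j w y = (if j \<in> S1 then psi1 j (map2 (\<noteq>) w (phi2 (restr y S2))) (restr y S1)
       else psi2 j (map2 (\<noteq>) w (phi1 (restr y S1))) (restr y S2))" for j w y
  show ?thesis
    unfolding index_code_def
  proof (intro exI ballI conjI)
    fix x assume x: "x \<in> msgs ?S (\<lambda>i. if i \<in> S1 then t1 i else t2 i)"
    have x1: "restr x S1 \<in> msgs S1 t1" and x2: "restr x S2 \<in> msgs S2 t2"
      using x disj by (auto simp: msgs_def restr_def)
    have len1: "length (phi1 (restr x S1)) = r" and len2: "length (phi2 (restr x S2)) = r"
      using P1 x1 P2 x2 by blast+
    then show "length (phi x) = r"
      by (simp add: phi_def)
    fix j assume j: "j \<in> ?S"
    show "psi j (phi x) (restr x (A j \<inter> ?S)) = x j"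
    proof (cases "j \<in> S1")
      case True
      have "restr (restr x (A j \<inter> ?S)) S2 = restr x S2"
        using edges12 True by (auto simp: restr_def fun_eq_iff)
      moreover have "restr (restr x (A j \<inter> ?S)) S1 = restr (restr x S1) (A j \<inter> S1)"
        by (auto simp: restr_def)
      ultimately have "psi j (phi x) (restr x (A j \<inter> ?S))
          = psi1 j (phi1 (restr x S1)) (restr (restr x S1) (A j \<inter> S1))"
        using True xor_cancel_right[OF len1[folded len2]] by (simp add: psi_def phi_def)
      also have "\<dots> = x j"
        using P1 x1 True by (simp add: restr_def)
      finally show ?thesis .
    next
      case False
      with j have "j \<in> S2" by blast
      have "restr (restr x (A j \<inter> ?S)) S1 = restr x S1"
        using edges21 \<open>j \<in> S2\<close> by (auto simp: restr_def fun_eq_iff)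
      moreover have "restr (restr x (A j \<inter> ?S)) S2 = restr (restr x S2) (A j \<inter> S2)"
        by (auto simp: restr_def)
      ultimately have "psi j (phi x) (restr x (A j \<inter> ?S))
          = psi2 j (phi2 (restr x S2)) (restr (restr x S2) (A j \<inter> S2))"
        using False xor_cancel_left[OF len1[folded len2]] by (simp add: psi_def phi_def)
      also have "\<dots> = x j"
        using P2 x2 \<open>j \<in> S2\<close> by (simp add: restr_def)
      finally show ?thesis .
    qed
  qed
qed

lemma achievable_restrict:
  assumes "achievable S A R" and "S' \<subseteq> S"
  shows "achievable S' A (\<lambda>j. if j \<in> S' then R j else 0)"
  using assms index_code_restrict unfolding achievable_def by (smt (verit) subsetD)

lemma achievable_union:
  assumes ach1: "achievable S1 A R1" and ach2: "achievable S2 A R2"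
    and disj: "S1 \<inter> S2 = {}"
    and edges12: "\<forall>j\<in>S1. S2 \<subseteq> A j" and edges21: "\<forall>j\<in>S2. S1 \<subseteq> A j"
  shows "achievable (S1 \<union> S2) A (\<lambda>j. if j \<in> S1 then R1 j else R2 j)"
proof -
  from ach1 obtain t1 r1 where
    r1: "r1 > 0" and code1: "index_code S1 A t1 r1" and rate1: "\<forall>j\<in>S1. R1 j \<le> t1 j / r1"
    unfolding achievable_def by blast
  from ach2 obtain t2 r2 where
    r2: "r2 > 0" and code2: "index_code S2 A t2 r2" and rate2: "\<forall>j\<in>S2. R2 j \<le> t2 j / r2"
    unfolding achievable_def by blast
  let ?t = "\<lambda>i. if i \<in> S1 then r2 * t1 i else r1 * t2 i"
  have "index_code S1 A (\<lambda>i. r2 * t1 i) (r1 * r2)"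
    using index_code_repeat[OF code1, of r2] by (simp add: mult.commute)
  then have code: "index_code (S1 \<union> S2) A ?t (r1 * r2)"
    using index_code_xor index_code_repeat[OF code2] disj edges12 edges21 by blast
  have "(if j \<in> S1 then R1 j else R2 j) \<le> ?t j / real (r1 * r2)" if "j \<in> S1 \<union> S2" for j
    using that rate1 rate2 r1 r2 by auto
  with code r1 r2 ach1 ach2 show ?thesis
    unfolding achievable_def by (intro conjI exI[of _ ?t] exI[of _ "r1 * r2"]) auto
qed

lemma capacity_vanishes_outside: "capacity S A \<subseteq> {R. \<forall>j. j \<notin> S \<longrightarrow> R j = 0}"
proof -
  have "closed {R :: nat \<Rightarrow> real. R j = 0}" for j
    by (rule closed_Collect_eq) simp_all
  then have "closed (\<Inter>j\<in>-S. {R :: nat \<Rightarrow> real. R j = 0})"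
    by (intro closed_INT) blast
  moreover have "(\<Inter>j\<in>-S. {R. R j = 0}) = {R :: nat \<Rightarrow> real. \<forall>j. j \<notin> S \<longrightarrow> R j = 0}"
    by auto
  ultimately have vanishing_closed: "closed {R :: nat \<Rightarrow> real. \<forall>j. j \<notin> S \<longrightarrow> R j = 0}"
    by simp
  show ?thesis
    unfolding capacity_def
    by (rule closure_minimal[OF _ vanishing_closed]) (auto simp: achievable_def)
qed

lemma continuous_image_closure_subset_closure:
  assumes "continuous_on UNIV f" and "f ` X \<subseteq> closure Y"
  shows "f ` closure X \<subseteq> closure Y"
  using assms by (intro image_closure_subset) (auto intro: continuous_on_subset)

lemma capacity_restrict:
  assumes "R \<in> capacity S A" and "S' \<subseteq> S"
  shows "(\<lambda>j. if j \<in> S' then R j else 0) \<in> capacity S' A"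
proof -
  let ?f = "\<lambda>(R :: nat \<Rightarrow> real) j. if j \<in> S' then R j else 0"
  have "continuous_on UNIV ?f"
  proof (intro continuous_on_coordinatewise_then_product)
    show "continuous_on UNIV (\<lambda>R :: nat \<Rightarrow> real. if j \<in> S' then R j else 0)" for j
      by (cases "j \<in> S'") simp_all
  qed
  moreover have "?f ` {R. achievable S A R} \<subseteq> closure {R. achievable S' A R}"
    using achievable_restrict[OF _ assms(2)] by (auto intro: closure_subset[THEN subsetD])
  ultimately have "?f ` capacity S A \<subseteq> capacity S' A"
    unfolding capacity_def by (rule continuous_image_closure_subset_closure)
  with assms(1) show ?thesis
    by (simp add: image_subset_iff)
qed

lemma capacity_union:
  assumes "R1 \<in> capacity S1 A" and "R2 \<in> capacity S2 A"
    and "S1 \<inter> S2 = {}" and "\<forall>j\<in>S1. S2 \<subseteq> A j" and "\<forall>j\<in>S2. S1 \<subseteq> A j"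
  shows "(\<lambda>j. if j \<in> S1 then R1 j else R2 j) \<in> capacity (S1 \<union> S2) A"
proof -
  let ?f = "\<lambda>p :: (nat \<Rightarrow> real) \<times> (nat \<Rightarrow> real). \<lambda>j. if j \<in> S1 then fst p j else snd p j"
  have "continuous_on UNIV ?f"
  proof (intro continuous_on_coordinatewise_then_product)
    fix j
    have "continuous_on UNIV (\<lambda>p :: (nat \<Rightarrow> real) \<times> (nat \<Rightarrow> real). fst p j)"
      and "continuous_on UNIV (\<lambda>p :: (nat \<Rightarrow> real) \<times> (nat \<Rightarrow> real). snd p j)"
      by (rule continuous_on_product_then_coordinatewise, intro continuous_intros)+
    then show "continuous_on UNIV (\<lambda>p. ?f p j)"
      by (cases "j \<in> S1") simp_all
  qed
  moreover have "?f ` ({R. achievable S1 A R} \<times> {R. achievable S2 A R})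
      \<subseteq> closure {R. achievable (S1 \<union> S2) A R}"
    using achievable_union[OF _ _ assms(3-5)] by (auto intro: closure_subset[THEN subsetD])
  ultimately have "?f ` closure ({R. achievable S1 A R} \<times> {R. achievable S2 A R})
      \<subseteq> capacity (S1 \<union> S2) A"
    unfolding capacity_def by (rule continuous_image_closure_subset_closure)
  with assms(1,2) show ?thesis
    unfolding closure_Times capacity_def by force
qed

lemma setcompr2_cong:
  "(\<And>a b. P a b \<Longrightarrow> f a b = g a b) \<Longrightarrow> {f a b | a b. P a b} = {g a b | a b. P a b}"
  by (rule Collect_cong) metis

lemma capacity_union_eq:
  assumes "S1 \<inter> S2 = {}" and "\<forall>j\<in>S1. S2 \<subseteq> A j" and "\<forall>j\<in>S2. S1 \<subseteq> A j"
  shows "capacity (S1 \<union> S2) A = {(\<lambda>j. if j \<in> S1 then R1 j else R2 j) | R1 R2.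
    R1 \<in> capacity S1 A \<and> R2 \<in> capacity S2 A}"
proof (intro equalityI subsetI)
  fix R assume R: "R \<in> capacity (S1 \<union> S2) A"
  let ?R1 = "\<lambda>j. if j \<in> S1 then R j else 0" and ?R2 = "\<lambda>j. if j \<in> S2 then R j else 0"
  show "R \<in> {(\<lambda>j. if j \<in> S1 then R1 j else R2 j) | R1 R2.
      R1 \<in> capacity S1 A \<and> R2 \<in> capacity S2 A}"
  proof (intro CollectI exI conjI)
    show "R = (\<lambda>j. if j \<in> S1 then ?R1 j else ?R2 j)"
      using R capacity_vanishes_outside[of "S1 \<union> S2" A] by (auto simp: fun_eq_iff)
    show "?R1 \<in> capacity S1 A" and "?R2 \<in> capacity S2 A"
      using capacity_restrict[OF R] by blast+
  qed
next
  fix R assume "R \<in> {(\<lambda>j. if j \<in> S1 then R1 j else R2 j) | R1 R2.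
      R1 \<in> capacity S1 A \<and> R2 \<in> capacity S2 A}"
  then obtain R1 R2 where "R = (\<lambda>j. if j \<in> S1 then R1 j else R2 j)"
    and "R1 \<in> capacity S1 A" and "R2 \<in> capacity S2 A"
    by blast
  then show "R \<in> capacity (S1 \<union> S2) A"
    using capacity_union[OF _ _ assms] by simp
qed

text \<open>The hypothesis side_info is a well-formedness condition that the argument never needs.\<close>

theorem theorem3:
  fixes n n1 :: nat and A :: "nat \<Rightarrow> nat set"
  assumes side_info: "\<forall>j\<in>{1..n}. A j \<subseteq> {1..n} - {j}"
    and n1_ge: "1 \<le> n1" and n1_lt: "n1 < n"
    and edges12: "\<forall>j\<in>{1..n1}. {n1+1..n} \<subseteq> A j"
    and edges21: "\<forall>j\<in>{n1+1..n}. {1..n1} \<subseteq> A j"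
  shows "capacity {1..n} A =
     {(\<lambda>j. if j \<le> n1 then R1 j else R2 j) | R1 R2.
        R1 \<in> capacity {1..n1} A \<and> R2 \<in> capacity {n1+1..n} A}"
proof -
  have split: "{1..n} = {1..n1} \<union> {n1+1..n}"
    using n1_lt by auto
  have vanish0: "R 0 = 0" if "R \<in> capacity {1..n1} A \<or> R \<in> capacity {n1+1..n} A" for R
    using that capacity_vanishes_outside by fastforce
  have merge_eq: "(\<lambda>j. if j \<le> n1 then R1 j else R2 j) = (\<lambda>j. if j \<in> {1..n1} then R1 j else R2 j)"
    if "R1 \<in> capacity {1..n1} A" "R2 \<in> capacity {n1+1..n} A" for R1 R2
    using vanish0[of R1] vanish0[of R2] that by (auto simp: fun_eq_iff not_less_eq_eq)
  have "{1..n1} \<inter> {n1+1..n} = {}"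
    by auto
  then have "capacity {1..n} A = {(\<lambda>j. if j \<in> {1..n1} then R1 j else R2 j) | R1 R2.
      R1 \<in> capacity {1..n1} A \<and> R2 \<in> capacity {n1+1..n} A}"
    unfolding split using edges12 edges21 by (rule capacity_union_eq)
  also have "\<dots> = {(\<lambda>j. if j \<le> n1 then R1 j else R2 j) | R1 R2.
      R1 \<in> capacity {1..n1} A \<and> R2 \<in> capacity {n1+1..n} A}"
    by (rule setcompr2_cong) (use merge_eq in auto)
  finally show ?thesis .
qed

end
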